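(* Consider two patches with $p=d_{12}$, $q=d_{21}$, $0<p,q<1$, in an environment alternating deterministically $e_1,e_2,e_1,e_2,\dots$ starting with $e_1$ at generation $0$. Write $M_1=m_1(e_1)$, $M_2=m_1(e_2)$, $m_1=m_2(e_1)$, $m_2=m_2(e_2)$, all positive and finite, and assume the offspring laws are not such that every individual has exactly one offspring almost surely. Then the metapopulation persists with positive probability if and only if $$ M_1M_2(1-p)^2+(M_1m_2+m_1M_2)pq+m_1m_2(1-q)^2>\min\big(2,\;1+M_1M_2m_1m_2(1-p-q)^2\big). $$
   Context: Model with environment: at each generation the environment is in a state $w$; every individual living in patch $i$ independently produces a random number of offspring with mean $m_i(w)$ (depending on the current environment state), and each offspring independently moves from patch $i$ to patch $j$ with probability $d_{ij}$ (dispersal does not depend on the environment). Here $d_{11}=1-p$, $d_{12}=p$, $d_{21}=q$, $d_{22}=1-q$. Persistence with positive probability means the total population is nonzero at all generations with positive probability (starting from one individual in either patch). *)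

theory Defs
  imports "HOL-Probability.Probability"
begin

text \<open>A population state is a pair (a,b):
  a individuals in patch 1 and b individuals in patch 2.\<close>

definition padd :: "nat \<times> nat \<Rightarrow> nat \<times> nat \<Rightarrow> nat \<times> nat" where
  "padd x y = (fst x + fst y, snd x + snd y)"

fun iid_sum :: "nat \<Rightarrow> (nat \<times> nat) pmf \<Rightarrow> (nat \<times> nat) pmf" where
  "iid_sum 0 D = return_pmf (0, 0)"
| "iid_sum (Suc k) D = bind_pmf D (\<lambda>x. bind_pmf (iid_sum k D) (\<lambda>y. return_pmf (padd x y)))"

text \<open>Offspring vector of one individual living in patch i (i = 1 or 2) whose number of
  offspring has law L: each offspring independently moves to the other patch with
  probability r (r = p = d12 for patch 1, r = q = d21 for patch 2).\<close>
definition offspring_vec :: "nat \<Rightarrow> nat pmf \<Rightarrow> real \<Rightarrow> (nat \<times> nat) pmf" where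
  "offspring_vec i L r =
     bind_pmf L (\<lambda>N. bind_pmf (binomial_pmf N r) (\<lambda>k.
        return_pmf (if i = 1 then (N - k, k) else (k, N - k))))"

text \<open>One generation in environment w; L i w is the offspring law in patch i under w.\<close>
definition gen_step :: "(nat \<Rightarrow> 'w \<Rightarrow> nat pmf) \<Rightarrow> real \<Rightarrow> real \<Rightarrow> 'w
    \<Rightarrow> nat \<times> nat \<Rightarrow> (nat \<times> nat) pmf" where
  "gen_step L p q w z =
     bind_pmf (iid_sum (fst z) (offspring_vec 1 (L 1 w) p)) (\<lambda>x.
     bind_pmf (iid_sum (snd z) (offspring_vec 2 (L 2 w) q)) (\<lambda>y.
       return_pmf (padd x y)))"

fun popZ :: "(nat \<Rightarrow> 'w \<Rightarrow> nat pmf) \<Rightarrow> real \<Rightarrow> real \<Rightarrow> (nat \<Rightarrow> 'w)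
    \<Rightarrow> nat \<times> nat \<Rightarrow> nat \<Rightarrow> (nat \<times> nat) pmf" where
  "popZ L p q env z0 0 = return_pmf z0"
| "popZ L p q env z0 (Suc n) = bind_pmf (popZ L p q env z0 n) (gen_step L p q (env n))"

text \<open>Persistence with positive probability: since extinction is absorbing, the events
  {Z_n \<noteq> 0} decrease in n, so P(Z_n \<noteq> 0 for all n) = inf_n P(Z_n \<noteq> 0); persistence
  with positive probability means this infimum is positive.\<close>
definition persists :: "(nat \<Rightarrow> 'w \<Rightarrow> nat pmf) \<Rightarrow> real \<Rightarrow> real \<Rightarrow> (nat \<Rightarrow> 'w)
    \<Rightarrow> nat \<times> nat \<Rightarrow> bool" where
  "persists L p q env z0 \<longleftrightarrow>
     (\<exists>c>0. \<forall>n. measure_pmf.prob (popZ L p q env z0 n) {z. z \<noteq> (0, 0)} \<ge> c)"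

definition pmf_mean :: "nat pmf \<Rightarrow> real" where
  "pmf_mean L = measure_pmf.expectation L real"

end

theory Submission
  imports Defs
begin

(* Conditioning on the first generation, the joint generating function of the population at
   generation n is obtained by composing backwards the one-generation maps
   h_w(s) = (f_{1,w}((1-p) s1 + p s2), f_{2,w}(q s1 + (1-q) s2)), where f_{i,w} generates the
   offspring law in patch i under w. So the extinction probabilities by generation n are the
   coordinates of h_{e1}(h_{e2}(...(0,0))), and persistence means that they stay bounded away
   from 1. Along even generations these are the iterates F^k(0,0) of the period map
   F = h_{e1} o h_{e2}, which increase to a fixed point of F.

   The condition of the theorem says exactly that the Perron root of the two-generation mean
   matrix A, the linearisation of F at (1,1), exceeds 1. If it does, b = (1,1) - t v for the
   Perron vector v and small t > 0 satisfies F(b) <= b, which bounds all iterates away from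
   (1,1). If it does not, the deficit W = (1,1) - Q of a fixed point Q satisfies
   0 <= W <= A W, which forces W = 0 or equality in every convexity bound; equality makes all
   offspring laws binary, and then the stationary distribution (q, p) of dispersal forces all
   means to be 1, so that every individual has exactly one child. *)

lemma expectation_bind_pmf_bounded:
  fixes f :: "'b \<Rightarrow> real"
  assumes "\<And>x. \<bar>f x\<bar> \<le> B"
  shows "measure_pmf.expectation (bind_pmf M N) f
           = measure_pmf.expectation M (\<lambda>x. measure_pmf.expectation (N x) f)"
  unfolding measure_pmf_bind
  by (rule integral_bind[where B=B and B'=1 and K="count_space UNIV"])
     (use assms in \<open>auto simp: space_subprob_algebra measure_pmf.subprob_space_axioms\<close>)

lemma convex_comb_unit_interval:
  fixes a b x y :: real
  assumes "0 \<le> a" "0 \<le> b" "a + b = 1" "x \<in> {0..1}" "y \<in> {0..1}"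
  shows "a * x + b * y \<in> {0..1}"
proof -
  have "a * x + b * y \<le> a * 1 + b * 1"
    using assms by (intro add_mono mult_left_mono) auto
  then show ?thesis using assms by auto
qed

lemma unit_square_iff: "s \<in> {0..1} \<times> {0..1} \<longleftrightarrow> (0, 0) \<le> s \<and> s \<le> (1::real, 1::real)"
  by (auto simp: less_eq_prod_def mem_Times_iff)

section \<open>Generating functions\<close>

definition pgf :: "nat pmf \<Rightarrow> real \<Rightarrow> real" where
  "pgf L x = measure_pmf.expectation L (\<lambda>N. x ^ N)"

definition joint_pgf :: "(nat \<times> nat) pmf \<Rightarrow> real \<times> real \<Rightarrow> real" where
  "joint_pgf D s = measure_pmf.expectation D (\<lambda>z. fst s ^ fst z * snd s ^ snd z)"

lemma integrable_pgf_power: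
  fixes x :: real
  assumes "x \<in> {0..1}"
  shows "integrable (measure_pmf L) (\<lambda>N. x ^ N)"
  by (rule measure_pmf.integrable_const_bound[where B=1]) (use assms in \<open>auto simp: power_le_one\<close>)

lemma pgf_unit_interval:
  assumes "x \<in> {0..1}"
  shows "pgf L x \<in> {0..1}"
  using assms measure_pmf.integral_le_const[OF integrable_pgf_power[OF assms], of 1]
  unfolding pgf_def by (auto simp: power_le_one integral_nonneg)

lemma pgf_mono:
  fixes x y :: real
  assumes "0 \<le> x" "x \<le> y" "y \<le> 1"
  shows "pgf L x \<le> pgf L y"
  unfolding pgf_def
  by (rule integral_mono) (use assms integrable_pgf_power[of x] integrable_pgf_power[of y] in
        \<open>auto intro: power_mono\<close>)

lemma pgf_tendsto:
  assumes "X \<longlonglongrightarrow> x" "\<And>k. X k \<in> {0..1}"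
  shows "(\<lambda>k. pgf L (X k)) \<longlonglongrightarrow> pgf L x"
  unfolding pgf_def
proof (rule integral_dominated_convergence[where w="\<lambda>_. 1"])
  show "AE N in measure_pmf L. (\<lambda>k. X k ^ N) \<longlonglongrightarrow> x ^ N"
    using assms(1) by (auto intro!: tendsto_power)
  show "\<And>k. AE N in measure_pmf L. norm (X k ^ N) \<le> 1"
    using assms(2) by (auto simp: power_le_one)
qed simp_all

lemma joint_pgf_return [simp]: "joint_pgf (return_pmf z) s = fst s ^ fst z * snd s ^ snd z"
  unfolding joint_pgf_def by simp

lemma joint_pgf_bind:
  assumes "s \<in> {0..1} \<times> {0..1}"
  shows "joint_pgf (bind_pmf M N) s = measure_pmf.expectation M (\<lambda>x. joint_pgf (N x) s)"
  unfolding joint_pgf_def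
  by (rule expectation_bind_pmf_bounded[where B=1])
     (use assms in \<open>auto simp: abs_mult power_le_one mult_le_one\<close>)

lemma joint_pgf_indep_sum:
  assumes "s \<in> {0..1} \<times> {0..1}"
  shows "joint_pgf (bind_pmf D1 (\<lambda>x. bind_pmf D2 (\<lambda>y. return_pmf (padd x y)))) s
           = joint_pgf D1 s * joint_pgf D2 s"
proof -
  have "joint_pgf (bind_pmf D1 (\<lambda>x. bind_pmf D2 (\<lambda>y. return_pmf (padd x y)))) s
      = measure_pmf.expectation D1 (\<lambda>x. measure_pmf.expectation D2 (\<lambda>y.
          (fst s ^ fst x * snd s ^ snd x) * (fst s ^ fst y * snd s ^ snd y)))"
    by (simp add: joint_pgf_bind assms padd_def power_add mult_ac)
  also have "\<dots> = joint_pgf D1 s * joint_pgf D2 s"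
    unfolding joint_pgf_def by simp
  finally show ?thesis .
qed

lemma joint_pgf_iid_sum:
  assumes "s \<in> {0..1} \<times> {0..1}"
  shows "joint_pgf (iid_sum k D) s = joint_pgf D s ^ k"
  by (induction k) (simp_all add: joint_pgf_indep_sum assms)

lemma expectation_binomial_pmf_power:
  assumes "0 \<le> r" "r \<le> 1"
  shows "measure_pmf.expectation (binomial_pmf N r) (\<lambda>k. x ^ (N - k) * y ^ k)
           = ((1 - r) * x + r * y) ^ N"
proof -
  have "measure_pmf.expectation (binomial_pmf N r) (\<lambda>k. x ^ (N - k) * y ^ k)
      = (\<Sum>k\<le>N. real (N choose k) * (r * y) ^ k * ((1 - r) * x) ^ (N - k))"
    using expectation_binomial_pmf'[of r N "\<lambda>k. x ^ (N - k) * y ^ k"] assms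
    by (simp add: power_mult_distrib mult_ac)
  also have "\<dots> = ((1 - r) * x + r * y) ^ N"
    by (simp add: binomial_ring add.commute)
  finally show ?thesis .
qed

lemma joint_pgf_offspring_vec:
  assumes "0 \<le> r" "r \<le> 1" "s \<in> {0..1} \<times> {0..1}"
  shows "joint_pgf (offspring_vec 1 L r) s = pgf L ((1 - r) * fst s + r * snd s)"
    and "joint_pgf (offspring_vec 2 L r) s = pgf L (r * fst s + (1 - r) * snd s)"
proof -
  have swap: "measure_pmf.expectation (binomial_pmf N r) (\<lambda>k. fst s ^ k * snd s ^ (N - k))
      = (r * fst s + (1 - r) * snd s) ^ N" for N
    using expectation_binomial_pmf_power[OF assms(1,2), of N "snd s" "fst s"]
    by (simp add: mult.commute add.commute)
  show "joint_pgf (offspring_vec 1 L r) s = pgf L ((1 - r) * fst s + r * snd s)"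
    unfolding offspring_vec_def pgf_def
    by (simp add: joint_pgf_bind assms expectation_binomial_pmf_power)
  show "joint_pgf (offspring_vec 2 L r) s = pgf L (r * fst s + (1 - r) * snd s)"
    unfolding offspring_vec_def pgf_def
    by (simp add: joint_pgf_bind assms swap)
qed

lemma prob_nonzero_eq_joint_pgf:
  "measure_pmf.prob D {z. z \<noteq> (0, 0)} = 1 - joint_pgf D (0, 0)"
proof -
  have "joint_pgf D (0, 0) = measure_pmf.expectation D (indicator {(0, 0)})"
    unfolding joint_pgf_def by (intro Bochner_Integration.integral_cong) (auto simp: indicator_def)
  then have "joint_pgf D (0, 0) = measure_pmf.prob D {(0, 0)}"
    by simp
  moreover have "{z. z \<noteq> (0, 0)} = UNIV - {(0::nat, 0::nat)}"
    by auto
  ultimately show ?thesis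
    using measure_pmf.prob_compl[of "{(0::nat, 0::nat)}" D] by simp
qed

lemma power_convexity_gap:
  fixes y :: real
  assumes "0 \<le> y" "y \<le> 1"
  shows "(if 2 \<le> N then (1 - y)^2 else 0) \<le> real N * (1 - y) - (1 - y ^ N)"
proof -
  have eq: "real N * (1 - y) - (1 - y ^ N) = (1 - y) * (\<Sum>k<N. 1 - y ^ k)"
    by (simp add: one_diff_power_eq[of y N] sum_subtractf algebra_simps)
  have terms: "0 \<le> 1 - y ^ k" for k
    using assms by (simp add: power_le_one)
  have "(if 2 \<le> N then 1 - y else 0) \<le> (\<Sum>k<N. 1 - y ^ k)"
  proof (cases "2 \<le> N")
    case True
    then have "1 - y ^ 1 \<le> (\<Sum>k<N. 1 - y ^ k)"
      by (intro member_le_sum terms) auto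
    with True show ?thesis by simp
  qed (auto intro: sum_nonneg terms)
  then have "(1 - y) * (if 2 \<le> N then 1 - y else 0) \<le> (1 - y) * (\<Sum>k<N. 1 - y ^ k)"
    using assms by (intro mult_left_mono) auto
  then show ?thesis
    unfolding eq by (cases "2 \<le> N") (simp_all add: power2_eq_square)
qed

lemma pgf_convexity_gap:
  assumes L: "integrable (measure_pmf L) real" and y: "y \<in> {0..1}"
  shows "measure_pmf.prob L {N. 2 \<le> N} * (1 - y)^2 \<le> pmf_mean L * (1 - y) - (1 - pgf L y)"
proof -
  have "measure_pmf.prob L {N. 2 \<le> N} * (1 - y)^2
      = measure_pmf.expectation L (\<lambda>N. indicator {N. 2 \<le> N} N * (1 - y)^2)"
    by simp
  also have "\<dots> = measure_pmf.expectation L (\<lambda>N. if 2 \<le> N then (1 - y)^2 else 0)"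
    by (intro Bochner_Integration.integral_cong) (auto simp: indicator_def)
  also have "\<dots> \<le> measure_pmf.expectation L (\<lambda>N. real N * (1 - y) - (1 - y ^ N))"
    by (rule integral_mono)
       (use L y integrable_pgf_power[OF y] power_convexity_gap[of y] in
         \<open>auto intro!: measure_pmf.integrable_const_bound[where B="(1 - y)^2"]\<close>)
  also have "\<dots> = pmf_mean L * (1 - y) - (1 - pgf L y)"
    unfolding pmf_mean_def pgf_def using L integrable_pgf_power[OF y]
    by (simp add: measure_pmf.prob_space)
  finally show ?thesis .
qed

lemma pgf_deficit_le_mean:
  assumes "integrable (measure_pmf L) real" "y \<in> {0..1}"
  shows "1 - pgf L y \<le> pmf_mean L * (1 - y)"
proof -
  have "0 \<le> measure_pmf.prob L {N. 2 \<le> N} * (1 - y)^2"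
    by simp
  then show ?thesis
    using pgf_convexity_gap[OF assms] by linarith
qed

lemma pgf_deficit_eq_mean_imp_binary:
  assumes "integrable (measure_pmf L) real" "y \<in> {0..1}" "y < 1"
    and "1 - pgf L y = pmf_mean L * (1 - y)"
  shows "measure_pmf.prob L {N. 2 \<le> N} = 0"
proof -
  have "measure_pmf.prob L {N. 2 \<le> N} * (1 - y)^2 \<le> 0"
    using pgf_convexity_gap[OF assms(1,2)] assms(4) by simp
  then show ?thesis
    using assms(3) by (simp add: mult_le_0_iff measure_nonneg order.antisym)
qed

lemma pgf_near_one:
  assumes L: "integrable (measure_pmf L) real" and "0 < pmf_mean L" "c < 1"
  obtains \<delta> where "0 < \<delta>" "\<delta> \<le> 1" "\<And>x. 0 < x \<Longrightarrow> x \<le> \<delta> \<Longrightarrow> c * pmf_mean L * x \<le> 1 - pgf L (1 - x)"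
proof -
  \<comment> \<open>\<open>(1 - pgf L (1 - x)) / x\<close> is the expectation of \<open>S x\<close>, which increases to the mean as \<open>x \<down> 0\<close>.\<close>
  define S where "S x N = (\<Sum>k<N. (1 - x) ^ k)" for x :: real and N :: nat
  have S_bounds: "0 \<le> S x N" "S x N \<le> real N" if "0 \<le> x" "x \<le> 1" for x N
    using that sum_mono[of "{..<N}" "\<lambda>k. (1 - x) ^ k" "\<lambda>_. 1"]
    unfolding S_def by (auto intro!: sum_nonneg simp: power_le_one)
  have S_antimono: "S y N \<le> S x N" if "0 \<le> x" "x \<le> y" "y \<le> 1" for x y N
    unfolding S_def using that by (intro sum_mono power_mono) auto
  have integrable_S: "integrable (measure_pmf L) (S x)" if "0 \<le> x" "x \<le> 1" for x
    by (rule Bochner_Integration.integrable_bound[OF L]) (use S_bounds[OF that] in auto)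
  have "(\<lambda>n. 1 / real (Suc n)) \<longlonglongrightarrow> 0"
    using LIMSEQ_inverse_real_of_nat by (simp add: inverse_eq_divide)
  then have "(\<lambda>n. S (1 / Suc n) N) \<longlonglongrightarrow> (\<Sum>k<N. (1 - 0) ^ k)" for N
    unfolding S_def by (intro tendsto_intros)
  then have "(\<lambda>n. measure_pmf.expectation L (S (1 / Suc n))) \<longlonglongrightarrow> pmf_mean L"
    unfolding pmf_mean_def
    by (intro integral_dominated_convergence[where w=real])
       (use L S_bounds in \<open>auto simp: field_simps\<close>)
  moreover have "c * pmf_mean L < pmf_mean L"
    using assms by simp
  ultimately obtain n where n: "c * pmf_mean L < measure_pmf.expectation L (S (1 / Suc n))"
    by (metis (no_types, lifting) order_tendstoD(1) eventually_sequentially order.refl)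
  have n1: "1 / real (Suc n) \<le> 1"
    by simp
  show ?thesis
  proof
    show "0 < 1 / real (Suc n)" "1 / real (Suc n) \<le> 1"
      using n1 by auto
    fix x :: real
    assume x: "0 < x" "x \<le> 1 / real (Suc n)"
    then have x1: "x \<le> 1"
      using n1 by linarith
    have "measure_pmf.expectation L (S (1 / Suc n)) \<le> measure_pmf.expectation L (S x)"
      using x x1 by (intro integral_mono integrable_S S_antimono) auto
    with n have "c * pmf_mean L * x \<le> x * measure_pmf.expectation L (S x)"
      using x by (simp add: mult.commute mult_left_mono)
    also have "\<dots> = measure_pmf.expectation L (\<lambda>N. 1 - (1 - x) ^ N)"
      unfolding S_def by (simp add: one_diff_power_eq flip: integral_mult_right_zero)
    also have "\<dots> = 1 - pgf L (1 - x)"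
      unfolding pgf_def using integrable_pgf_power[of "1 - x" L] x x1
      by (simp add: measure_pmf.prob_space)
    finally show "c * pmf_mean L * x \<le> 1 - pgf L (1 - x)" .
  qed
qed

lemma binary_offspring_support:
  fixes L :: "nat pmf"
  assumes "measure_pmf.prob L {N. 2 \<le> N} = 0"
  shows "set_pmf L \<subseteq> {0, 1}"
proof
  fix N
  assume N: "N \<in> set_pmf L"
  show "N \<in> {0, 1}"
  proof (rule ccontr)
    assume "N \<notin> {0, 1}"
    then have "pmf L N \<le> measure_pmf.prob L {N. 2 \<le> N}"
      by (auto simp: measure_pmf_single[symmetric] intro!: measure_pmf.finite_measure_mono)
    with N assms show False
      by (simp add: set_pmf_iff pmf_nonneg order.antisym)
  qed
qed

lemma binary_offspring_mean:
  assumes "measure_pmf.prob L {N. 2 \<le> N} = 0"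
  shows "pmf_mean L = pmf L 1"
proof -
  have "pmf_mean L = (\<Sum>N\<in>{0, 1}. real N * pmf L N)"
    unfolding pmf_mean_def
    by (rule integral_measure_pmf_real) (use binary_offspring_support[OF assms] in auto)
  then show ?thesis
    by simp
qed

lemma binary_offspring_eq_return:
  assumes "measure_pmf.prob L {N. 2 \<le> N} = 0" "pmf_mean L = 1"
  shows "L = return_pmf 1"
proof -
  have support: "set_pmf L \<subseteq> {0, 1}"
    by (rule binary_offspring_support[OF assms(1)])
  then have "pmf L 0 + pmf L 1 = 1"
    using sum_pmf_eq_1[of "{0, 1}" L] by simp
  moreover have "pmf L 1 = 1"
    using binary_offspring_mean[OF assms(1)] assms(2) by simp
  ultimately have "set_pmf L \<subseteq> {1}"
    using support by (auto simp: set_pmf_iff)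
  then show ?thesis
    by (simp add: set_pmf_subset_singleton)
qed

section \<open>The backward generating map\<close>

definition pgf_step :: "(nat \<Rightarrow> 'w \<Rightarrow> nat pmf) \<Rightarrow> real \<Rightarrow> real \<Rightarrow> 'w \<Rightarrow> real \<times> real \<Rightarrow> real \<times> real" where
  "pgf_step L p q w s =
     (pgf (L 1 w) ((1 - p) * fst s + p * snd s), pgf (L 2 w) (q * fst s + (1 - q) * snd s))"

text \<open>\<open>pgf_iter L p q env n\<close> applies the map of generation \<open>n - 1\<close> first and that of
  generation \<open>0\<close> last.\<close>

fun pgf_iter :: "(nat \<Rightarrow> 'w \<Rightarrow> nat pmf) \<Rightarrow> real \<Rightarrow> real \<Rightarrow> (nat \<Rightarrow> 'w) \<Rightarrow> nat
    \<Rightarrow> real \<times> real \<Rightarrow> real \<times> real" where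
  "pgf_iter L p q env 0 s = s"
| "pgf_iter L p q env (Suc n) s = pgf_iter L p q env n (pgf_step L p q (env n) s)"

definition pgf_period :: "(nat \<Rightarrow> 'w \<Rightarrow> nat pmf) \<Rightarrow> real \<Rightarrow> real \<Rightarrow> 'w \<Rightarrow> 'w
    \<Rightarrow> real \<times> real \<Rightarrow> real \<times> real" where
  "pgf_period L p q e1 e2 s = pgf_step L p q e1 (pgf_step L p q e2 s)"

lemma pgf_iter_alternating:
  "pgf_iter L p q (\<lambda>n. if even n then e1 else e2) (2 * k) s = (pgf_period L p q e1 e2 ^^ k) s"
proof (induction k arbitrary: s)
  case (Suc k)
  have "pgf_iter L p q (\<lambda>n. if even n then e1 else e2) (2 * Suc k) s
      = pgf_iter L p q (\<lambda>n. if even n then e1 else e2) (2 * k) (pgf_period L p q e1 e2 s)"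
    by (simp add: pgf_period_def)
  then show ?case
    using Suc.IH by (simp add: funpow_swap1)
qed simp

context
  fixes p q :: real
  assumes p: "0 \<le> p" "p \<le> 1" and q: "0 \<le> q" "q \<le> 1"
begin

lemma dispersal_unit_interval:
  assumes "s \<in> {0..1} \<times> {0..1}"
  shows "(1 - p) * fst s + p * snd s \<in> {0..1}" "q * fst s + (1 - q) * snd s \<in> {0..1}"
  by (intro convex_comb_unit_interval; use assms p q in auto)+

lemma pgf_step_unit_square:
  assumes "s \<in> {0..1} \<times> {0..1}"
  shows "pgf_step L p q w s \<in> {0..1} \<times> {0..1}"
  unfolding pgf_step_def mem_Times_iff fst_conv snd_conv
  by (intro conjI pgf_unit_interval dispersal_unit_interval assms)

lemma pgf_step_mono:
  assumes "s \<in> {0..1} \<times> {0..1}" "t \<in> {0..1} \<times> {0..1}" "s \<le> t"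
  shows "pgf_step L p q w s \<le> pgf_step L p q w t"
proof -
  have "(1 - p) * fst s + p * snd s \<le> (1 - p) * fst t + p * snd t"
    "q * fst s + (1 - q) * snd s \<le> q * fst t + (1 - q) * snd t"
    using assms p q by (auto intro!: add_mono mult_left_mono simp: less_eq_prod_def)
  then show ?thesis
    using dispersal_unit_interval[OF assms(1)] dispersal_unit_interval[OF assms(2)]
    unfolding pgf_step_def by (auto intro!: pgf_mono)
qed

lemma pgf_iter_mono:
  "s \<in> {0..1} \<times> {0..1} \<Longrightarrow> t \<in> {0..1} \<times> {0..1} \<Longrightarrow> s \<le> t
    \<Longrightarrow> pgf_iter L p q env n s \<le> pgf_iter L p q env n t"
  by (induction n arbitrary: s t) (simp_all add: pgf_step_unit_square pgf_step_mono)

lemma pgf_iter_zero_mono: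
  assumes "m \<le> n"
  shows "pgf_iter L p q env m (0, 0) \<le> pgf_iter L p q env n (0, 0)"
proof -
  have zero: "(0::real, 0::real) \<in> {0..1} \<times> {0..1}"
    by simp
  have "(0, 0) \<le> pgf_step L p q w (0, 0)" for w
    using pgf_step_unit_square[OF zero, of L w] by (simp add: unit_square_iff)
  then have "pgf_iter L p q env k (0, 0) \<le> pgf_iter L p q env (Suc k) (0, 0)" for k
    by (simp add: pgf_iter_mono[OF zero pgf_step_unit_square[OF zero]])
  then have "incseq (\<lambda>n. pgf_iter L p q env n (0, 0))"
    by (rule incseq_SucI)
  then show ?thesis
    using assms by (rule incseqD)
qed

lemma pgf_step_tendsto:
  assumes "X \<longlonglongrightarrow> x" "\<And>k. X k \<in> {0..1} \<times> {0..1}"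
  shows "(\<lambda>k. pgf_step L p q w (X k)) \<longlonglongrightarrow> pgf_step L p q w x"
  unfolding pgf_step_def
  by (intro tendsto_Pair pgf_tendsto dispersal_unit_interval assms tendsto_intros)

lemma joint_pgf_gen_step:
  assumes "s \<in> {0..1} \<times> {0..1}"
  shows "joint_pgf (gen_step L p q w z) s
           = fst (pgf_step L p q w s) ^ fst z * snd (pgf_step L p q w s) ^ snd z"
  unfolding gen_step_def pgf_step_def
  by (simp only: joint_pgf_indep_sum joint_pgf_iid_sum joint_pgf_offspring_vec assms p q fst_conv snd_conv)

lemma joint_pgf_popZ:
  assumes "s \<in> {0..1} \<times> {0..1}"
  shows "joint_pgf (popZ L p q env z0 n) s
           = fst (pgf_iter L p q env n s) ^ fst z0 * snd (pgf_iter L p q env n s) ^ snd z0"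
  using assms
proof (induction n arbitrary: s)
  case (Suc n)
  have "joint_pgf (popZ L p q env z0 (Suc n)) s
      = measure_pmf.expectation (popZ L p q env z0 n) (\<lambda>z. joint_pgf (gen_step L p q (env n) z) s)"
    by (simp add: joint_pgf_bind Suc.prems)
  also have "\<dots> = joint_pgf (popZ L p q env z0 n) (pgf_step L p q (env n) s)"
    by (simp only: joint_pgf_gen_step[OF Suc.prems]) (simp add: joint_pgf_def)
  finally show ?case
    using Suc.IH[OF pgf_step_unit_square[OF Suc.prems]] by simp
qed simp

lemma persists_iff_pgf_iter:
  shows "persists L p q env (1, 0) \<longleftrightarrow> (\<exists>c>0. \<forall>n. c \<le> 1 - fst (pgf_iter L p q env n (0, 0)))"
    and "persists L p q env (0, 1) \<longleftrightarrow> (\<exists>c>0. \<forall>n. c \<le> 1 - snd (pgf_iter L p q env n (0, 0)))"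
  unfolding persists_def
  by (simp_all add: prob_nonzero_eq_joint_pgf joint_pgf_popZ)

lemma pgf_period_unit_square:
  "s \<in> {0..1} \<times> {0..1} \<Longrightarrow> pgf_period L p q e1 e2 s \<in> {0..1} \<times> {0..1}"
  unfolding pgf_period_def by (intro pgf_step_unit_square)

lemma pgf_period_mono:
  "s \<in> {0..1} \<times> {0..1} \<Longrightarrow> t \<in> {0..1} \<times> {0..1} \<Longrightarrow> s \<le> t
    \<Longrightarrow> pgf_period L p q e1 e2 s \<le> pgf_period L p q e1 e2 t"
  unfolding pgf_period_def by (intro pgf_step_mono pgf_step_unit_square)

lemma funpow_pgf_period_unit_square:
  "s \<in> {0..1} \<times> {0..1} \<Longrightarrow> (pgf_period L p q e1 e2 ^^ k) s \<in> {0..1} \<times> {0..1}"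
  by (induction k) (simp_all add: pgf_period_unit_square)

lemma pgf_period_iterates_le:
  assumes b: "b \<in> {0..1} \<times> {0..1}" "pgf_period L p q e1 e2 b \<le> b"
  shows "(pgf_period L p q e1 e2 ^^ k) (0, 0) \<le> b"
proof (induction k)
  case 0
  show ?case
    using b(1) by (simp add: unit_square_iff)
next
  case (Suc k)
  have "(pgf_period L p q e1 e2 ^^ Suc k) (0, 0)
      = pgf_period L p q e1 e2 ((pgf_period L p q e1 e2 ^^ k) (0, 0))"
    by simp
  also have "\<dots> \<le> pgf_period L p q e1 e2 b"
    by (intro pgf_period_mono funpow_pgf_period_unit_square b(1) Suc.IH) simp
  also have "\<dots> \<le> b"
    by (rule b(2))
  finally show ?case .
qed

lemma persists_of_supersolution:
  assumes b: "b \<in> {0..1} \<times> {0..1}" "pgf_period L p q e1 e2 b \<le> b" "fst b < 1" "snd b < 1"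
  shows "persists L p q (\<lambda>n. if even n then e1 else e2) (1, 0)"
    and "persists L p q (\<lambda>n. if even n then e1 else e2) (0, 1)"
proof -
  have le_b: "pgf_iter L p q (\<lambda>n. if even n then e1 else e2) n (0, 0) \<le> b" for n
  proof -
    have "pgf_iter L p q (\<lambda>n. if even n then e1 else e2) n (0, 0)
        \<le> pgf_iter L p q (\<lambda>n. if even n then e1 else e2) (2 * n) (0, 0)"
      by (rule pgf_iter_zero_mono) simp
    also have "\<dots> = (pgf_period L p q e1 e2 ^^ n) (0, 0)"
      by (rule pgf_iter_alternating)
    also have "\<dots> \<le> b"
      by (rule pgf_period_iterates_le[OF b(1,2)])
    finally show ?thesis .
  qed
  have "fst (pgf_iter L p q (\<lambda>n. if even n then e1 else e2) n (0, 0)) \<le> fst b"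
    and "snd (pgf_iter L p q (\<lambda>n. if even n then e1 else e2) n (0, 0)) \<le> snd b" for n
    using le_b[of n] by (simp_all add: less_eq_prod_def)
  then show "persists L p q (\<lambda>n. if even n then e1 else e2) (1, 0)"
    and "persists L p q (\<lambda>n. if even n then e1 else e2) (0, 1)"
    unfolding persists_iff_pgf_iter
    using b(3,4) by (auto intro: exI[of _ "1 - fst b"] exI[of _ "1 - snd b"] simp: algebra_simps)
qed

lemma pgf_period_iterates_converge:
  obtains Q where "Q \<in> {0..1} \<times> {0..1}" "pgf_period L p q e1 e2 Q = Q"
    "(\<lambda>k. (pgf_period L p q e1 e2 ^^ k) (0, 0)) \<longlonglongrightarrow> Q"
proof -
  define X where "X k = (pgf_period L p q e1 e2 ^^ k) (0, 0)" for k
  have X_unit: "X k \<in> {0..1} \<times> {0..1}" for k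
    unfolding X_def by (simp add: funpow_pgf_period_unit_square)
  have "X k \<le> X (Suc k)" for k
    using pgf_iter_zero_mono[of "2 * k" "2 * Suc k" L "\<lambda>n. if even n then e1 else e2"]
    unfolding X_def pgf_iter_alternating by simp
  then have "incseq (\<lambda>k. fst (X k))" "incseq (\<lambda>k. snd (X k))"
    by (auto intro!: incseq_SucI simp: less_eq_prod_def)
  moreover have "bdd_above (range (\<lambda>k. fst (X k)))" "bdd_above (range (\<lambda>k. snd (X k)))"
    using X_unit by (auto intro!: bdd_aboveI[where M=1] simp: mem_Times_iff)
  ultimately have "(\<lambda>k. (fst (X k), snd (X k))) \<longlonglongrightarrow> (SUP k. fst (X k), SUP k. snd (X k))"
    by (intro tendsto_Pair LIMSEQ_incseq_SUP)
  then obtain Q where lim: "X \<longlonglongrightarrow> Q"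
    by auto
  have Q_unit: "Q \<in> {0..1} \<times> {0..1}"
    using closed_sequentially[OF closed_Times[OF closed_atLeastAtMost closed_atLeastAtMost]] X_unit lim
    by blast
  have "(\<lambda>k. pgf_period L p q e1 e2 (X k)) \<longlonglongrightarrow> pgf_period L p q e1 e2 Q"
    unfolding pgf_period_def by (intro pgf_step_tendsto pgf_step_unit_square lim X_unit)
  moreover have "(\<lambda>k. pgf_period L p q e1 e2 (X k)) \<longlonglongrightarrow> Q"
    using LIMSEQ_Suc[OF lim] by (simp add: X_def)
  ultimately have "pgf_period L p q e1 e2 Q = Q"
    by (rule LIMSEQ_unique)
  then show ?thesis
    using that Q_unit lim unfolding X_def by blast
qed

lemma not_persists_of_iterates_tendsto_one:
  assumes "(\<lambda>k. (pgf_period L p q e1 e2 ^^ k) (0, 0)) \<longlonglongrightarrow> (1, 1)"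
  shows "\<not> persists L p q (\<lambda>n. if even n then e1 else e2) (1, 0)"
    and "\<not> persists L p q (\<lambda>n. if even n then e1 else e2) (0, 1)"
proof -
  have no_margin: "\<not> (\<exists>c>0. \<forall>n. c \<le> 1 - x n)" if "(\<lambda>k. x (2 * k)) \<longlonglongrightarrow> 1" for x :: "nat \<Rightarrow> real"
  proof
    assume "\<exists>c>0. \<forall>n. c \<le> 1 - x n"
    then obtain c where "c > 0" "\<And>n. x n \<le> 1 - c"
      by (auto simp: algebra_simps)
    then have "1 \<le> 1 - c"
      by (intro LIMSEQ_le_const2[OF that]) auto
    with \<open>c > 0\<close> show False
      by simp
  qed
  have "(\<lambda>k. pgf_iter L p q (\<lambda>n. if even n then e1 else e2) (2 * k) (0, 0)) \<longlonglongrightarrow> (1, 1)"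
    using assms by (simp add: pgf_iter_alternating)
  from tendsto_fst[OF this] tendsto_snd[OF this]
  show "\<not> persists L p q (\<lambda>n. if even n then e1 else e2) (1, 0)"
    and "\<not> persists L p q (\<lambda>n. if even n then e1 else e2) (0, 1)"
    unfolding persists_iff_pgf_iter by (auto dest: no_margin)
qed

end

section \<open>The mean matrix\<close>

lemma pos_matrix2_eigenvector_gt_one:
  fixes a b c d :: real
  assumes pos: "0 < a" "0 < b" "0 < c" "0 < d"
    and growth: "a + d > min 2 (1 + (a * d - b * c))"
  obtains v1 v2 r where "0 < v1" "0 < v2" "1 < r" "a * v1 + b * v2 = r * v1" "c * v1 + d * v2 = r * v2"
proof -
  define s where "s = sqrt ((a - d)^2 + 4 * b * c)"
  define r where "r = (a + d + s) / 2"
  have disc: "0 \<le> (a - d)^2 + 4 * b * c"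
    using pos by (auto intro!: add_nonneg_nonneg mult_nonneg_nonneg)
  then have s2: "s^2 = (a - d)^2 + 4 * b * c"
    unfolding s_def by simp
  have s0: "0 \<le> s"
    unfolding s_def using disc by simp
  have "(a - d)^2 < s^2"
    using s2 pos by simp
  then have "\<bar>a - d\<bar> < s"
    using s0 by (intro power2_less_imp_less[of "\<bar>a - d\<bar>"]) simp_all
  then have v2: "0 < r - a"
    unfolding r_def by (simp add: field_simps abs_less_iff)
  have "r * r - (a + d) * r = (s^2 - (a + d)^2) / 4"
    unfolding r_def by (simp add: field_simps power2_eq_square)
  then have char: "r * r - (a + d) * r + (a * d - b * c) = 0"
    unfolding s2 by (simp add: power2_eq_square algebra_simps)
  have r1: "1 < r"
  proof (cases "a + d > 2")
    case True
    then show ?thesis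
      unfolding r_def using s0 by simp
  next
    case False
    then have "a + d > 1 + (a * d - b * c)"
      using growth by (simp add: min_def split: if_splits)
    then have "(2 - (a + d))^2 < s^2"
      unfolding s2 by (simp add: power2_eq_square algebra_simps)
    then have "2 - (a + d) < s"
      using s0 by (rule power2_less_imp_less)
    then show ?thesis
      unfolding r_def by simp
  qed
  have "a * b + b * (r - a) = r * b"
    by (simp add: algebra_simps)
  moreover have "c * b + d * (r - a) = r * (r - a)"
    using char by (simp add: algebra_simps)
  ultimately show ?thesis
    using pos v2 r1 by (intro that[of b "r - a" r])
qed

lemma pos_matrix2_subinvariant:
  fixes a b c d w1 w2 :: real
  assumes pos: "0 < a" "0 < b" "0 < c" "0 < d"
    and no_growth: "\<not> (a + d > min 2 (1 + (a * d - b * c)))"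
    and w: "0 \<le> w1" "0 \<le> w2" "w1 \<le> a * w1 + b * w2" "w2 \<le> c * w1 + d * w2"
  shows "(w1 = 0 \<and> w2 = 0) \<or> (0 < w1 \<and> 0 < w2 \<and> a * w1 + b * w2 = w1 \<and> c * w1 + d * w2 = w2)"
proof -
  define D where "D = (1 - a) * (1 - d) - b * c"
  have "a + d \<le> 2" and D0: "0 \<le> D"
    using no_growth unfolding D_def by (auto simp: min_def algebra_simps split: if_splits)
  moreover have "0 < b * c"
    using pos by simp
  then have "0 < (1 - a) * (1 - d)"
    using D0 unfolding D_def by linarith
  ultimately have a1: "0 < 1 - a" and d1: "0 < 1 - d"
    by (auto simp: zero_less_mult_iff)
  have i1: "(1 - a) * w1 \<le> b * w2" and i2: "(1 - d) * w2 \<le> c * w1"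
    using w(3,4) by (simp_all add: algebra_simps)
  have j1: "(1 - d) * ((1 - a) * w1) \<le> b * ((1 - d) * w2)"
    using i1 d1 mult_left_mono[OF i1, of "1 - d"] by (simp add: algebra_simps)
  have j2: "b * ((1 - d) * w2) \<le> b * (c * w1)"
    using i2 pos by (simp add: mult_left_mono)
  have "D * w1 \<le> 0"
    using j1 j2 unfolding D_def by (simp add: algebra_simps)
  show ?thesis
  proof (cases "w1 = 0")
    case True
    then have "w2 = 0"
      using i2 d1 w(2) by (simp add: mult_le_0_iff)
    with True show ?thesis
      by simp
  next
    case False
    then have w1: "0 < w1"
      using w(1) by simp
    with \<open>D * w1 \<le> 0\<close> D0 have "D = 0"
      by (simp add: mult_le_0_iff)
    moreover have "(1 - d) * ((1 - a) * w1) - b * (c * w1) = D * w1"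
      unfolding D_def by (simp add: algebra_simps)
    ultimately have "(1 - d) * ((1 - a) * w1) = b * (c * w1)"
      by simp
    with j1 j2 have "(1 - d) * ((1 - a) * w1) = (1 - d) * (b * w2)" "b * ((1 - d) * w2) = b * (c * w1)"
      by (simp_all add: algebra_simps)
    then have e1: "(1 - a) * w1 = b * w2" and e2: "(1 - d) * w2 = c * w1"
      using d1 pos by simp_all
    have "0 < (1 - d) * w2"
      using e2 w1 pos by simp
    then have "0 < w2"
      using d1 by (simp add: zero_less_mult_iff)
    with w1 e1 e2 show ?thesis
      by (simp add: algebra_simps)
  qed
qed

text \<open>\<open>mean_step\<close> is the linearisation of \<open>pgf_step\<close> at \<open>(1, 1)\<close>, acting on deficits
  \<open>(1, 1) - s\<close>.\<close>

definition mean_step :: "(nat \<Rightarrow> 'w \<Rightarrow> nat pmf) \<Rightarrow> real \<Rightarrow> real \<Rightarrow> 'w \<Rightarrow> real \<times> real \<Rightarrow> real \<times> real" where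
  "mean_step L p q w v =
     (pmf_mean (L 1 w) * ((1 - p) * fst v + p * snd v), pmf_mean (L 2 w) * (q * fst v + (1 - q) * snd v))"

definition mean_period :: "(nat \<Rightarrow> 'w \<Rightarrow> nat pmf) \<Rightarrow> real \<Rightarrow> real \<Rightarrow> 'w \<Rightarrow> 'w
    \<Rightarrow> real \<times> real \<Rightarrow> real \<times> real" where
  "mean_period L p q e1 e2 v = mean_step L p q e1 (mean_step L p q e2 v)"

lemma mean_step_scaleR: "mean_step L p q w (t *\<^sub>R v) = t *\<^sub>R mean_step L p q w v"
  unfolding mean_step_def by (simp add: algebra_simps)

lemma mean_period_matrix:
  fixes L :: "nat \<Rightarrow> 'w \<Rightarrow> nat pmf" and e1 e2 :: 'w and p q M1 M2 m1 m2 :: real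
  defines "M1 \<equiv> pmf_mean (L 1 e1)" and "M2 \<equiv> pmf_mean (L 1 e2)"
    and "m1 \<equiv> pmf_mean (L 2 e1)" and "m2 \<equiv> pmf_mean (L 2 e2)"
  assumes "0 < p" "p < 1" "0 < q" "q < 1" "0 < M1" "0 < M2" "0 < m1" "0 < m2"
  obtains a b c d where "0 < a" "0 < b" "0 < c" "0 < d"
    "\<And>v. mean_period L p q e1 e2 v = (a * fst v + b * snd v, c * fst v + d * snd v)"
    "a + d = M1 * M2 * (1 - p)^2 + (M1 * m2 + m1 * M2) * p * q + m1 * m2 * (1 - q)^2"
    "a * d - b * c = M1 * M2 * m1 * m2 * (1 - p - q)^2"
proof -
  define a where "a = M1 * ((1 - p) * M2 * (1 - p) + p * m2 * q)"
  define b where "b = M1 * ((1 - p) * M2 * p + p * m2 * (1 - q))"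
  define c where "c = m1 * (q * M2 * (1 - p) + (1 - q) * m2 * q)"
  define d where "d = m1 * (q * M2 * p + (1 - q) * m2 * (1 - q))"
  show ?thesis
  proof (rule that[of a b c d])
    show "0 < a" "0 < b" "0 < c" "0 < d"
      unfolding a_def b_def c_def d_def using assms(5-12) by (simp_all add: add_pos_pos)
    show "mean_period L p q e1 e2 v = (a * fst v + b * snd v, c * fst v + d * snd v)" for v
      unfolding mean_period_def mean_step_def a_def b_def c_def d_def assms(1-4)
      by (simp add: algebra_simps)
    show "a + d = M1 * M2 * (1 - p)^2 + (M1 * m2 + m1 * M2) * p * q + m1 * m2 * (1 - q)^2"
      unfolding a_def d_def by (simp add: power2_eq_square algebra_simps)
    show "a * d - b * c = M1 * M2 * m1 * m2 * (1 - p - q)^2"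
      unfolding a_def b_def c_def d_def by (simp add: power2_eq_square algebra_simps)
  qed
qed

context
  fixes p q :: real
  assumes p: "0 < p" "p < 1" and q: "0 < q" "q < 1"
begin

lemma mean_step_mono:
  assumes "0 \<le> pmf_mean (L 1 w)" "0 \<le> pmf_mean (L 2 w)" "v \<le> v'"
  shows "mean_step L p q w v \<le> mean_step L p q w v'"
  using assms p q unfolding mean_step_def less_eq_prod_def
  by (auto intro!: mult_left_mono add_mono)

lemma mean_step_pos:
  assumes "0 < pmf_mean (L 1 w)" "0 < pmf_mean (L 2 w)" "0 < fst v" "0 < snd v"
  shows "0 < fst (mean_step L p q w v)" "0 < snd (mean_step L p q w v)"
  using assms p q unfolding mean_step_def by (simp_all add: add_pos_pos)

lemma mean_step_cancel:
  assumes "0 < pmf_mean (L 1 w)" "v \<le> v'" "mean_step L p q w v = mean_step L p q w v'"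
  shows "v = v'"
proof -
  have "pmf_mean (L 1 w) * ((1 - p) * fst v + p * snd v) = pmf_mean (L 1 w) * ((1 - p) * fst v' + p * snd v')"
    using assms(3) unfolding mean_step_def by (simp add: prod_eq_iff)
  then have "(1 - p) * fst v + p * snd v = (1 - p) * fst v' + p * snd v'"
    using assms(1) by simp
  then have "(1 - p) * (fst v' - fst v) + p * (snd v' - snd v) = 0"
    by (simp add: algebra_simps)
  moreover have "0 \<le> (1 - p) * (fst v' - fst v)" "0 \<le> p * (snd v' - snd v)"
    using assms(2) p by (simp_all add: less_eq_prod_def)
  ultimately have "(1 - p) * (fst v' - fst v) = 0" "p * (snd v' - snd v) = 0"
    by linarith+
  then show ?thesis
    using p by (simp add: prod_eq_iff)
qed

text \<open>The weights \<open>(q, p)\<close> form the stationary distribution of the dispersal matrix, so a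
  step with all means at most 1 cannot increase the weighted total of a nonnegative vector,
  and keeps it only if both means are 1.\<close>

lemma mean_step_stationary_weight_le:
  assumes "0 \<le> pmf_mean (L 1 w)" "pmf_mean (L 1 w) \<le> 1" "0 \<le> pmf_mean (L 2 w)" "pmf_mean (L 2 w) \<le> 1"
    and "(0, 0) \<le> v"
  shows "q * fst (mean_step L p q w v) + p * snd (mean_step L p q w v) \<le> q * fst v + p * snd v"
proof -
  define z1 where "z1 = (1 - p) * fst v + p * snd v"
  define z2 where "z2 = q * fst v + (1 - q) * snd v"
  have "0 \<le> z1" "0 \<le> z2"
    using assms(5) p q unfolding z1_def z2_def by (simp_all add: less_eq_prod_def)
  then have "q * (pmf_mean (L 1 w) * z1) + p * (pmf_mean (L 2 w) * z2) \<le> q * z1 + p * z2"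
    using assms p q by (intro add_mono mult_left_mono mult_left_le_one_le) auto
  also have "\<dots> = q * fst v + p * snd v"
    unfolding z1_def z2_def by (simp add: algebra_simps)
  finally show ?thesis
    unfolding mean_step_def z1_def z2_def by simp
qed

lemma mean_step_stationary_weight_eq:
  assumes "pmf_mean (L 1 w) \<le> 1" "pmf_mean (L 2 w) \<le> 1" "0 < fst v" "0 < snd v"
    and "q * fst (mean_step L p q w v) + p * snd (mean_step L p q w v) = q * fst v + p * snd v"
  shows "pmf_mean (L 1 w) = 1" "pmf_mean (L 2 w) = 1"
proof -
  define z1 where "z1 = (1 - p) * fst v + p * snd v"
  define z2 where "z2 = q * fst v + (1 - q) * snd v"
  have z: "0 < z1" "0 < z2"
    using assms(3,4) p q unfolding z1_def z2_def by (simp_all add: add_pos_pos)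
  have "q * (1 - pmf_mean (L 1 w)) * z1 + p * (1 - pmf_mean (L 2 w)) * z2 = 0"
    using assms(5) unfolding mean_step_def z1_def z2_def by (simp add: algebra_simps)
  moreover have "0 \<le> q * (1 - pmf_mean (L 1 w)) * z1" "0 \<le> p * (1 - pmf_mean (L 2 w)) * z2"
    using assms(1,2) z p q by simp_all
  ultimately have "q * (1 - pmf_mean (L 1 w)) * z1 = 0" "p * (1 - pmf_mean (L 2 w)) * z2 = 0"
    by linarith+
  then show "pmf_mean (L 1 w) = 1" "pmf_mean (L 2 w) = 1"
    using z p q by simp_all
qed

section \<open>Persistence criterion\<close>

lemma pgf_step_deficit_le:
  assumes "integrable (measure_pmf (L 1 w)) real" "integrable (measure_pmf (L 2 w)) real"
    and s: "s \<in> {0..1} \<times> {0..1}"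
  shows "(1, 1) - pgf_step L p q w s \<le> mean_step L p q w ((1, 1) - s)"
proof -
  have y: "(1 - p) * fst s + p * snd s \<in> {0..1}" "q * fst s + (1 - q) * snd s \<in> {0..1}"
    using dispersal_unit_interval[of p q s] p q s by auto
  show ?thesis
    using pgf_deficit_le_mean[OF assms(1) y(1)] pgf_deficit_le_mean[OF assms(2) y(2)]
    unfolding pgf_step_def mean_step_def by (simp add: algebra_simps)
qed

lemma pgf_step_deficit_eq_imp_binary:
  assumes "integrable (measure_pmf (L 1 w)) real" "integrable (measure_pmf (L 2 w)) real"
    and s: "s \<in> {0..1} \<times> {0..1}" "fst s < 1" "snd s < 1"
    and eq: "(1, 1) - pgf_step L p q w s = mean_step L p q w ((1, 1) - s)"
  shows "measure_pmf.prob (L 1 w) {N. 2 \<le> N} = 0" "measure_pmf.prob (L 2 w) {N. 2 \<le> N} = 0"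
proof -
  have y: "(1 - p) * fst s + p * snd s \<in> {0..1}" "q * fst s + (1 - q) * snd s \<in> {0..1}"
    using dispersal_unit_interval[of p q s] p q s by auto
  have "(1 - p) * fst s + p * snd s < (1 - p) * 1 + p * 1" "q * fst s + (1 - q) * snd s < q * 1 + (1 - q) * 1"
    using p q s by (intro add_strict_mono mult_strict_left_mono; simp)+
  then have y1: "(1 - p) * fst s + p * snd s < 1" "q * fst s + (1 - q) * snd s < 1"
    by simp_all
  have "1 - pgf (L 1 w) ((1 - p) * fst s + p * snd s) = pmf_mean (L 1 w) * (1 - ((1 - p) * fst s + p * snd s))"
    "1 - pgf (L 2 w) (q * fst s + (1 - q) * snd s) = pmf_mean (L 2 w) * (1 - (q * fst s + (1 - q) * snd s))"
    using eq unfolding pgf_step_def mean_step_def by (simp_all add: prod_eq_iff algebra_simps)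
  then show "measure_pmf.prob (L 1 w) {N. 2 \<le> N} = 0" "measure_pmf.prob (L 2 w) {N. 2 \<le> N} = 0"
    using pgf_deficit_eq_mean_imp_binary assms(1,2) y y1 by blast+
qed

lemma pgf_step_deficit_near_one:
  assumes L: "integrable (measure_pmf (L 1 w)) real" "integrable (measure_pmf (L 2 w)) real"
    and mean: "0 < pmf_mean (L 1 w)" "0 < pmf_mean (L 2 w)" and "c < 1"
  obtains \<delta> where "0 < \<delta>" "\<delta> \<le> 1" "\<And>x. 0 < fst x \<Longrightarrow> 0 < snd x \<Longrightarrow> fst x \<le> \<delta> \<Longrightarrow> snd x \<le> \<delta>
      \<Longrightarrow> c *\<^sub>R mean_step L p q w x \<le> (1, 1) - pgf_step L p q w ((1, 1) - x)"
proof -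
  obtain \<delta>1 where \<delta>1: "0 < \<delta>1" "\<delta>1 \<le> 1"
    "\<And>z. 0 < z \<Longrightarrow> z \<le> \<delta>1 \<Longrightarrow> c * pmf_mean (L 1 w) * z \<le> 1 - pgf (L 1 w) (1 - z)"
    using pgf_near_one[OF L(1) mean(1) \<open>c < 1\<close>] by blast
  obtain \<delta>2 where \<delta>2: "0 < \<delta>2" "\<delta>2 \<le> 1"
    "\<And>z. 0 < z \<Longrightarrow> z \<le> \<delta>2 \<Longrightarrow> c * pmf_mean (L 2 w) * z \<le> 1 - pgf (L 2 w) (1 - z)"
    using pgf_near_one[OF L(2) mean(2) \<open>c < 1\<close>] by blast
  show ?thesis
  proof (rule that[of "min \<delta>1 \<delta>2"])
    show "0 < min \<delta>1 \<delta>2" "min \<delta>1 \<delta>2 \<le> 1"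
      using \<delta>1 \<delta>2 by auto
    fix x :: "real \<times> real"
    assume x: "0 < fst x" "0 < snd x" "fst x \<le> min \<delta>1 \<delta>2" "snd x \<le> min \<delta>1 \<delta>2"
    define z1 where "z1 = (1 - p) * fst x + p * snd x"
    define z2 where "z2 = q * fst x + (1 - q) * snd x"
    have "z1 \<le> (1 - p) * min \<delta>1 \<delta>2 + p * min \<delta>1 \<delta>2" "z2 \<le> q * min \<delta>1 \<delta>2 + (1 - q) * min \<delta>1 \<delta>2"
      unfolding z1_def z2_def using x p q by (intro add_mono mult_left_mono; simp)+
    then have "z1 \<le> \<delta>1" "z2 \<le> \<delta>2"
      by (simp_all add: algebra_simps)
    moreover have "0 < z1" "0 < z2"
      unfolding z1_def z2_def using x p q by (simp_all add: add_pos_pos)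
    ultimately have "c * pmf_mean (L 1 w) * z1 \<le> 1 - pgf (L 1 w) (1 - z1)"
      "c * pmf_mean (L 2 w) * z2 \<le> 1 - pgf (L 2 w) (1 - z2)"
      using \<delta>1(3) \<delta>2(3) by blast+
    moreover have "(1 - p) * (1 - fst x) + p * (1 - snd x) = 1 - z1"
      "q * (1 - fst x) + (1 - q) * (1 - snd x) = 1 - z2"
      unfolding z1_def z2_def by (simp_all add: algebra_simps)
    ultimately show "c *\<^sub>R mean_step L p q w x \<le> (1, 1) - pgf_step L p q w ((1, 1) - x)"
      unfolding mean_step_def pgf_step_def z1_def z2_def by (simp add: mult.assoc)
  qed
qed

lemma pgf_period_deficit_near_one:
  assumes L: "\<And>i w. i \<in> {1, 2} \<Longrightarrow> w \<in> {e1, e2} \<Longrightarrow> integrable (measure_pmf (L i w)) real"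
    and mean: "\<And>i w. i \<in> {1, 2} \<Longrightarrow> w \<in> {e1, e2} \<Longrightarrow> 0 < pmf_mean (L i w)"
    and c: "0 < c" "c < 1"
  obtains \<delta> where "0 < \<delta>" "\<delta> \<le> 1" "\<And>x. 0 < fst x \<Longrightarrow> 0 < snd x \<Longrightarrow> fst x \<le> \<delta> \<Longrightarrow> snd x \<le> \<delta>
      \<Longrightarrow> (c * c) *\<^sub>R mean_period L p q e1 e2 x \<le> (1, 1) - pgf_period L p q e1 e2 ((1, 1) - x)"
proof -
  have e1: "integrable (measure_pmf (L 1 e1)) real" "integrable (measure_pmf (L 2 e1)) real"
      "0 < pmf_mean (L 1 e1)" "0 < pmf_mean (L 2 e1)"
    and e2: "integrable (measure_pmf (L 1 e2)) real" "integrable (measure_pmf (L 2 e2)) real"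
      "0 < pmf_mean (L 1 e2)" "0 < pmf_mean (L 2 e2)"
    using L mean by auto
  obtain \<delta>1 where \<delta>1: "0 < \<delta>1" "\<delta>1 \<le> 1" "\<And>y. 0 < fst y \<Longrightarrow> 0 < snd y \<Longrightarrow> fst y \<le> \<delta>1 \<Longrightarrow> snd y \<le> \<delta>1
      \<Longrightarrow> c *\<^sub>R mean_step L p q e1 y \<le> (1, 1) - pgf_step L p q e1 ((1, 1) - y)"
    using pgf_step_deficit_near_one[where L=L and w=e1, OF e1 c(2)] by blast
  obtain \<delta>2 where \<delta>2: "0 < \<delta>2" "\<delta>2 \<le> 1" "\<And>x. 0 < fst x \<Longrightarrow> 0 < snd x \<Longrightarrow> fst x \<le> \<delta>2 \<Longrightarrow> snd x \<le> \<delta>2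
      \<Longrightarrow> c *\<^sub>R mean_step L p q e2 x \<le> (1, 1) - pgf_step L p q e2 ((1, 1) - x)"
    using pgf_step_deficit_near_one[where L=L and w=e2, OF e2 c(2)] by blast
  \<comment> \<open>After the first step the deficit has grown by at most the factor \<open>K\<close>.\<close>
  define K where "K = pmf_mean (L 1 e2) + pmf_mean (L 2 e2)"
  define \<delta> where "\<delta> = min \<delta>2 (\<delta>1 / K)"
  have K: "0 < K" "pmf_mean (L 1 e2) \<le> K" "pmf_mean (L 2 e2) \<le> K"
    unfolding K_def using e2 by simp_all
  then have \<delta>: "0 < \<delta>" "\<delta> \<le> \<delta>2" "K * \<delta> \<le> \<delta>1"
    unfolding \<delta>_def using \<delta>1(1) \<delta>2(1) by (auto simp: min_def field_simps)
  show ?thesis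
  proof (rule that[of \<delta>])
    show "0 < \<delta>" "\<delta> \<le> 1"
      using \<delta> \<delta>2(2) by simp_all
    fix x :: "real \<times> real"
    assume x: "0 < fst x" "0 < snd x" "fst x \<le> \<delta>" "snd x \<le> \<delta>"
    define y where "y = c *\<^sub>R mean_step L p q e2 x"
    have "mean_step L p q e2 x \<le> mean_step L p q e2 (\<delta>, \<delta>)"
      using e2 x by (intro mean_step_mono) (simp_all add: less_eq_prod_def)
    then have "fst (mean_step L p q e2 x) \<le> pmf_mean (L 1 e2) * \<delta>"
      "snd (mean_step L p q e2 x) \<le> pmf_mean (L 2 e2) * \<delta>"
      by (simp_all add: less_eq_prod_def mean_step_def algebra_simps)
    moreover have "pmf_mean (L 1 e2) * \<delta> \<le> K * \<delta>" "pmf_mean (L 2 e2) * \<delta> \<le> K * \<delta>"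
      using K \<delta>(1) by (simp_all add: mult_right_mono)
    ultimately have "fst (mean_step L p q e2 x) \<le> K * \<delta>" "snd (mean_step L p q e2 x) \<le> K * \<delta>"
      by linarith+
    moreover have pos: "0 < fst (mean_step L p q e2 x)" "0 < snd (mean_step L p q e2 x)"
      using mean_step_pos[where L=L and w=e2, OF e2(3,4) x(1,2)] by simp_all
    moreover have "c * fst (mean_step L p q e2 x) \<le> fst (mean_step L p q e2 x)"
      "c * snd (mean_step L p q e2 x) \<le> snd (mean_step L p q e2 x)"
      using pos c by (simp_all add: mult_left_le_one_le)
    ultimately have y: "0 < fst y" "0 < snd y" "fst y \<le> \<delta>1" "snd y \<le> \<delta>1"
      unfolding y_def using c \<delta>(3) by (simp_all, linarith+)
    have "pgf_step L p q e2 ((1, 1) - x) \<le> (1, 1) - y"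
      using \<delta>2(3)[OF x(1,2)] x(3,4) \<delta>(2) unfolding y_def by (simp add: less_eq_prod_def algebra_simps)
    then have "pgf_period L p q e1 e2 ((1, 1) - x) \<le> pgf_step L p q e1 ((1, 1) - y)"
      unfolding pgf_period_def using x y \<delta> \<delta>1(2) \<delta>2(2) p q
      by (intro pgf_step_mono pgf_step_unit_square) (auto simp: mem_Times_iff)
    moreover have "c *\<^sub>R mean_step L p q e1 y \<le> (1, 1) - pgf_step L p q e1 ((1, 1) - y)"
      by (rule \<delta>1(3)[OF y])
    ultimately show "(c * c) *\<^sub>R mean_period L p q e1 e2 x \<le> (1, 1) - pgf_period L p q e1 e2 ((1, 1) - x)"
      unfolding y_def mean_period_def mean_step_scaleR by (simp add: less_eq_prod_def)
  qed
qed

lemma pgf_period_supersolution: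
  assumes L: "\<And>i w. i \<in> {1, 2} \<Longrightarrow> w \<in> {e1, e2} \<Longrightarrow> integrable (measure_pmf (L i w)) real"
    and mean: "\<And>i w. i \<in> {1, 2} \<Longrightarrow> w \<in> {e1, e2} \<Longrightarrow> 0 < pmf_mean (L i w)"
    and v: "0 < fst v" "0 < snd v" and r: "1 < r" "mean_period L p q e1 e2 v = r *\<^sub>R v"
  obtains b where "b \<in> {0..1} \<times> {0..1}" "pgf_period L p q e1 e2 b \<le> b" "fst b < 1" "snd b < 1"
proof -
  \<comment> \<open>The two steps lose a factor \<open>c\<close> each against the growth \<open>r\<close>, so we need \<open>c\<^sup>2 r \<ge> 1\<close>.\<close>
  define c where "c = (1 + r) / (2 * r)"
  have "c * c * r = (1 + r)^2 / (4 * r)"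
    unfolding c_def using r(1) by (simp add: field_simps power2_eq_square)
  moreover have "4 * r \<le> (1 + r)^2"
    using zero_le_power2[of "r - 1"] by (simp add: power2_eq_square algebra_simps)
  ultimately have "1 \<le> c * c * r"
    using r(1) by (simp add: le_divide_eq)
  moreover have "0 < c" "c < 1"
    unfolding c_def using r(1) by (simp_all add: field_simps)
  ultimately have c: "0 < c" "c < 1" "1 \<le> c * c * r"
    by simp_all
  obtain \<delta> where \<delta>: "0 < \<delta>" "\<delta> \<le> 1" "\<And>x. 0 < fst x \<Longrightarrow> 0 < snd x \<Longrightarrow> fst x \<le> \<delta> \<Longrightarrow> snd x \<le> \<delta>
      \<Longrightarrow> (c * c) *\<^sub>R mean_period L p q e1 e2 x \<le> (1, 1) - pgf_period L p q e1 e2 ((1, 1) - x)"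
    using pgf_period_deficit_near_one[of e1 e2 L c, OF L mean c(1,2)] by blast
  define t where "t = \<delta> / (fst v + snd v)"
  have t: "0 < t" "t * fst v \<le> \<delta>" "t * snd v \<le> \<delta>"
    unfolding t_def using v \<delta>(1) by (auto simp: field_simps)
  define b where "b = (1, 1) - t *\<^sub>R v"
  have "(c * c) *\<^sub>R mean_period L p q e1 e2 (t *\<^sub>R v) \<le> (1, 1) - pgf_period L p q e1 e2 b"
    unfolding b_def using \<delta>(3)[of "t *\<^sub>R v"] t v by simp
  moreover have "(c * c) *\<^sub>R mean_period L p q e1 e2 (t *\<^sub>R v) = (c * c * r * t) *\<^sub>R v"
    using r(2) unfolding mean_period_def by (simp add: mean_step_scaleR)
  moreover have "t * fst v \<le> c * c * r * t * fst v" "t * snd v \<le> c * c * r * t * snd v"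
    using mult_right_mono[OF c(3), of "t * fst v"] mult_right_mono[OF c(3), of "t * snd v"] t v
    by (simp_all add: mult_ac)
  ultimately have "pgf_period L p q e1 e2 b \<le> b"
    unfolding b_def by (simp add: less_eq_prod_def)
  moreover have "b \<in> {0..1} \<times> {0..1}" "fst b < 1" "snd b < 1"
    unfolding b_def using t v \<delta>(2) by (auto simp: mem_Times_iff)
  ultimately show ?thesis
    using that by blast
qed

lemma pgf_period_fixpoint_deficits:
  assumes L: "\<And>i w. i \<in> {1, 2} \<Longrightarrow> w \<in> {e1, e2} \<Longrightarrow> integrable (measure_pmf (L i w)) real"
    and Q: "Q \<in> {0..1} \<times> {0..1}" "pgf_period L p q e1 e2 Q = Q"
  shows "(1, 1) - pgf_step L p q e2 Q \<le> mean_step L p q e2 ((1, 1) - Q)"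
    and "(1, 1) - Q \<le> mean_step L p q e1 ((1, 1) - pgf_step L p q e2 Q)"
proof -
  have pq: "0 \<le> p" "p \<le> 1" "0 \<le> q" "q \<le> 1"
    using p q by simp_all
  show "(1, 1) - pgf_step L p q e2 Q \<le> mean_step L p q e2 ((1, 1) - Q)"
    using L by (intro pgf_step_deficit_le Q) auto
  have "(1, 1) - pgf_step L p q e1 (pgf_step L p q e2 Q)
      \<le> mean_step L p q e1 ((1, 1) - pgf_step L p q e2 Q)"
    using L by (intro pgf_step_deficit_le pgf_step_unit_square[OF pq] Q) auto
  then show "(1, 1) - Q \<le> mean_step L p q e1 ((1, 1) - pgf_step L p q e2 Q)"
    using Q(2) unfolding pgf_period_def by simp
qed

lemma critical_fixpoint_deficits_eq:
  assumes L: "\<And>i w. i \<in> {1, 2} \<Longrightarrow> w \<in> {e1, e2} \<Longrightarrow> integrable (measure_pmf (L i w)) real"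
    and mean: "\<And>i w. i \<in> {1, 2} \<Longrightarrow> w \<in> {e1, e2} \<Longrightarrow> 0 < pmf_mean (L i w)"
    and Q: "Q \<in> {0..1} \<times> {0..1}" "pgf_period L p q e1 e2 Q = Q"
    and critical: "mean_period L p q e1 e2 ((1, 1) - Q) = (1, 1) - Q"
  shows "(1, 1) - pgf_step L p q e2 Q = mean_step L p q e2 ((1, 1) - Q)"
    and "(1, 1) - Q = mean_step L p q e1 ((1, 1) - pgf_step L p q e2 Q)"
proof -
  define W where "W = (1, 1) - Q"
  define Y where "Y = (1, 1) - pgf_step L p q e2 Q"
  have Y_le: "Y \<le> mean_step L p q e2 W" and W_le: "W \<le> mean_step L p q e1 Y"
    using pgf_period_fixpoint_deficits[OF L Q] unfolding W_def Y_def by simp_all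
  have mean_e1: "0 \<le> pmf_mean (L 1 e1)" "0 < pmf_mean (L 1 e1)" "0 \<le> pmf_mean (L 2 e1)"
    using mean by (simp_all add: less_imp_le)
  have "mean_step L p q e1 Y \<le> mean_step L p q e1 (mean_step L p q e2 W)"
    using Y_le mean_e1 by (intro mean_step_mono) simp_all
  also have "\<dots> = W"
    using critical unfolding W_def mean_period_def .
  finally have W_eq: "mean_step L p q e1 Y = W"
    using W_le by simp
  then show "(1, 1) - Q = mean_step L p q e1 ((1, 1) - pgf_step L p q e2 Q)"
    unfolding W_def Y_def by simp
  have "mean_step L p q e1 Y = mean_step L p q e1 (mean_step L p q e2 W)"
    using W_eq critical unfolding W_def mean_period_def by simp
  then show "(1, 1) - pgf_step L p q e2 Q = mean_step L p q e2 ((1, 1) - Q)"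
    using mean_step_cancel[where L=L and w=e1, OF mean_e1(2) Y_le] unfolding W_def Y_def by simp
qed

lemma critical_fixpoint_binary_offspring:
  assumes L: "\<And>i w. i \<in> {1, 2} \<Longrightarrow> w \<in> {e1, e2} \<Longrightarrow> integrable (measure_pmf (L i w)) real"
    and mean: "\<And>i w. i \<in> {1, 2} \<Longrightarrow> w \<in> {e1, e2} \<Longrightarrow> 0 < pmf_mean (L i w)"
    and Q: "Q \<in> {0..1} \<times> {0..1}" "pgf_period L p q e1 e2 Q = Q" "fst Q < 1" "snd Q < 1"
    and critical: "mean_period L p q e1 e2 ((1, 1) - Q) = (1, 1) - Q"
  shows "\<forall>i\<in>{1::nat, 2}. \<forall>w\<in>{e1, e2}. measure_pmf.prob (L i w) {N. 2 \<le> N} = 0"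
proof -
  have int: "integrable (measure_pmf (L 1 e1)) real" "integrable (measure_pmf (L 2 e1)) real"
    "integrable (measure_pmf (L 1 e2)) real" "integrable (measure_pmf (L 2 e2)) real"
    using L by simp_all
  note deficits = critical_fixpoint_deficits_eq[OF L mean Q(1,2) critical]
  then have e2: "measure_pmf.prob (L 1 e2) {N. 2 \<le> N} = 0 \<and> measure_pmf.prob (L 2 e2) {N. 2 \<le> N} = 0"
    using pgf_step_deficit_eq_imp_binary[where L=L and w=e2, OF int(3,4) Q(1,3,4)] by simp
  have "fst (pgf_step L p q e2 Q) < 1" "snd (pgf_step L p q e2 Q) < 1"
    using mean_step_pos[where L=L and w=e2, of "(1, 1) - Q"] mean Q(3,4) deficits(1)
    by (simp_all add: prod_eq_iff)
  moreover have "pgf_step L p q e2 Q \<in> {0..1} \<times> {0..1}"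
    using p q by (intro pgf_step_unit_square Q(1)) simp_all
  moreover have "(1, 1) - pgf_step L p q e1 (pgf_step L p q e2 Q)
      = mean_step L p q e1 ((1, 1) - pgf_step L p q e2 Q)"
    using deficits(2) Q(2) unfolding pgf_period_def by simp
  ultimately have "measure_pmf.prob (L 1 e1) {N. 2 \<le> N} = 0 \<and> measure_pmf.prob (L 2 e1) {N. 2 \<le> N} = 0"
    using pgf_step_deficit_eq_imp_binary[where L=L and w=e1, OF int(1,2)] by simp
  with e2 show ?thesis
    by auto
qed

lemma critical_fixpoint_trivial_offspring:
  assumes L: "\<And>i w. i \<in> {1, 2} \<Longrightarrow> w \<in> {e1, e2} \<Longrightarrow> integrable (measure_pmf (L i w)) real"
    and mean: "\<And>i w. i \<in> {1, 2} \<Longrightarrow> w \<in> {e1, e2} \<Longrightarrow> 0 < pmf_mean (L i w)"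
    and Q: "Q \<in> {0..1} \<times> {0..1}" "pgf_period L p q e1 e2 Q = Q" "fst Q < 1" "snd Q < 1"
    and critical: "mean_period L p q e1 e2 ((1, 1) - Q) = (1, 1) - Q"
  shows "\<forall>i\<in>{1::nat, 2}. \<forall>w\<in>{e1, e2}. L i w = return_pmf 1"
proof -
  define W where "W = (1, 1) - Q"
  define Y where "Y = (1, 1) - pgf_step L p q e2 Q"
  have Y_eq: "Y = mean_step L p q e2 W" and W_eq: "W = mean_step L p q e1 Y"
    using critical_fixpoint_deficits_eq[OF L mean Q(1,2) critical] unfolding W_def Y_def by simp_all
  have W_pos: "0 < fst W" "0 < snd W"
    using Q(3,4) unfolding W_def by simp_all
  have Y_pos: "0 < fst Y" "0 < snd Y"
    using mean_step_pos[where L=L and w=e2, OF _ _ W_pos] mean unfolding Y_eq by simp_all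
  have binary: "measure_pmf.prob (L i w) {N. 2 \<le> N} = 0" if "i \<in> {1, 2}" "w \<in> {e1, e2}" for i w
    using critical_fixpoint_binary_offspring[OF L mean Q critical] that by blast
  have mean_le: "pmf_mean (L i w) \<le> 1" if "i \<in> {1, 2}" "w \<in> {e1, e2}" for i w
    using binary_offspring_mean[OF binary[OF that]] pmf_le_1 by simp
  \<comment> \<open>Along the cycle \<open>W \<mapsto> Y \<mapsto> W\<close> the stationary weight can only decrease, so both steps preserve it.\<close>
  have "q * fst (mean_step L p q e1 Y) + p * snd (mean_step L p q e1 Y) \<le> q * fst Y + p * snd Y"
    using Y_pos mean mean_le by (intro mean_step_stationary_weight_le) (simp_all add: less_imp_le less_eq_prod_def)
  moreover have "q * fst (mean_step L p q e2 W) + p * snd (mean_step L p q e2 W) \<le> q * fst W + p * snd W"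
    using W_pos mean mean_le by (intro mean_step_stationary_weight_le) (simp_all add: less_imp_le less_eq_prod_def)
  ultimately have "q * fst (mean_step L p q e1 Y) + p * snd (mean_step L p q e1 Y) = q * fst Y + p * snd Y"
    "q * fst (mean_step L p q e2 W) + p * snd (mean_step L p q e2 W) = q * fst W + p * snd W"
    unfolding W_eq[symmetric] Y_eq[symmetric] by linarith+
  then have "pmf_mean (L i w) = 1" if "i \<in> {1, 2}" "w \<in> {e1, e2}" for i w
    using mean_step_stationary_weight_eq[where L=L and w=e1, OF _ _ Y_pos]
      mean_step_stationary_weight_eq[where L=L and w=e2, OF _ _ W_pos] mean_le that by auto
  then show ?thesis
    using binary binary_offspring_eq_return by blast
qed

lemma pgf_period_fixpoint_eq_one:
  fixes a b c d :: real
  assumes L: "\<And>i w. i \<in> {1, 2} \<Longrightarrow> w \<in> {e1, e2} \<Longrightarrow> integrable (measure_pmf (L i w)) real"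
    and mean: "\<And>i w. i \<in> {1, 2} \<Longrightarrow> w \<in> {e1, e2} \<Longrightarrow> 0 < pmf_mean (L i w)"
    and T: "\<And>v. mean_period L p q e1 e2 v = (a * fst v + b * snd v, c * fst v + d * snd v)"
    and abcd: "0 < a" "0 < b" "0 < c" "0 < d"
    and no_growth: "\<not> (a + d > min 2 (1 + (a * d - b * c)))"
    and nontrivial: "\<not> (\<forall>i\<in>{1::nat, 2}. \<forall>w\<in>{e1, e2}. L i w = return_pmf 1)"
    and Q: "Q \<in> {0..1} \<times> {0..1}" "pgf_period L p q e1 e2 Q = Q"
  shows "Q = (1, 1)"
proof -
  define W where "W = (1, 1) - Q"
  have "W \<le> mean_step L p q e1 ((1, 1) - pgf_step L p q e2 Q)"
    using pgf_period_fixpoint_deficits[OF L Q] unfolding W_def by simp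
  also have "\<dots> \<le> mean_period L p q e1 e2 W"
    unfolding mean_period_def W_def using pgf_period_fixpoint_deficits[OF L Q] mean
    by (intro mean_step_mono) (simp_all add: less_imp_le)
  finally have "fst W \<le> a * fst W + b * snd W" "snd W \<le> c * fst W + d * snd W"
    unfolding T by (simp_all add: less_eq_prod_def)
  moreover have "0 \<le> fst W" "0 \<le> snd W"
    using Q(1) unfolding W_def by (simp_all add: mem_Times_iff)
  ultimately have "(fst W = 0 \<and> snd W = 0)
      \<or> (0 < fst W \<and> 0 < snd W \<and> a * fst W + b * snd W = fst W \<and> c * fst W + d * snd W = snd W)"
    by (intro pos_matrix2_subinvariant[OF abcd no_growth])
  then show ?thesis
  proof (elim disjE conjE)
    assume "fst W = 0" "snd W = 0"
    then show ?thesis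
      unfolding W_def by (simp add: prod_eq_iff)
  next
    assume W: "0 < fst W" "0 < snd W" "a * fst W + b * snd W = fst W" "c * fst W + d * snd W = snd W"
    then have "mean_period L p q e1 e2 ((1, 1) - Q) = (1, 1) - Q"
      unfolding T W_def[symmetric] by (simp add: prod_eq_iff)
    moreover have "fst Q < 1" "snd Q < 1"
      using W(1,2) unfolding W_def by simp_all
    ultimately have "\<forall>i\<in>{1::nat, 2}. \<forall>w\<in>{e1, e2}. L i w = return_pmf 1"
      by (intro critical_fixpoint_trivial_offspring[OF L mean Q])
    with nontrivial show ?thesis
      by contradiction
  qed
qed

lemma alternating_persists_of_growth:
  fixes a b c d :: real
  assumes L: "\<And>i w. i \<in> {1, 2} \<Longrightarrow> w \<in> {e1, e2} \<Longrightarrow> integrable (measure_pmf (L i w)) real"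
    and mean: "\<And>i w. i \<in> {1, 2} \<Longrightarrow> w \<in> {e1, e2} \<Longrightarrow> 0 < pmf_mean (L i w)"
    and T: "\<And>v. mean_period L p q e1 e2 v = (a * fst v + b * snd v, c * fst v + d * snd v)"
    and abcd: "0 < a" "0 < b" "0 < c" "0 < d"
    and growth: "a + d > min 2 (1 + (a * d - b * c))"
  shows "persists L p q (\<lambda>n. if even n then e1 else e2) (1, 0)"
    and "persists L p q (\<lambda>n. if even n then e1 else e2) (0, 1)"
proof -
  obtain v1 v2 r where v: "0 < v1" "0 < v2" "1 < r" "a * v1 + b * v2 = r * v1" "c * v1 + d * v2 = r * v2"
    using pos_matrix2_eigenvector_gt_one[OF abcd growth] by blast
  have eigen: "mean_period L p q e1 e2 (v1, v2) = r *\<^sub>R (v1, v2)"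
    unfolding T using v by simp
  have "0 < fst (v1, v2)" "0 < snd (v1, v2)"
    using v by simp_all
  from pgf_period_supersolution[OF L mean this v(3) eigen]
  obtain s where s: "s \<in> {0..1} \<times> {0..1}" "pgf_period L p q e1 e2 s \<le> s" "fst s < 1" "snd s < 1" .
  have pq: "0 \<le> p" "p \<le> 1" "0 \<le> q" "q \<le> 1"
    using p q by simp_all
  from persists_of_supersolution[OF pq s]
  show "persists L p q (\<lambda>n. if even n then e1 else e2) (1, 0)"
    and "persists L p q (\<lambda>n. if even n then e1 else e2) (0, 1)" .
qed

lemma alternating_not_persists_of_no_growth:
  fixes a b c d :: real
  assumes L: "\<And>i w. i \<in> {1, 2} \<Longrightarrow> w \<in> {e1, e2} \<Longrightarrow> integrable (measure_pmf (L i w)) real"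
    and mean: "\<And>i w. i \<in> {1, 2} \<Longrightarrow> w \<in> {e1, e2} \<Longrightarrow> 0 < pmf_mean (L i w)"
    and T: "\<And>v. mean_period L p q e1 e2 v = (a * fst v + b * snd v, c * fst v + d * snd v)"
    and abcd: "0 < a" "0 < b" "0 < c" "0 < d"
    and no_growth: "\<not> (a + d > min 2 (1 + (a * d - b * c)))"
    and nontrivial: "\<not> (\<forall>i\<in>{1::nat, 2}. \<forall>w\<in>{e1, e2}. L i w = return_pmf 1)"
  shows "\<not> persists L p q (\<lambda>n. if even n then e1 else e2) (1, 0)"
    and "\<not> persists L p q (\<lambda>n. if even n then e1 else e2) (0, 1)"
proof -
  have pq: "0 \<le> p" "p \<le> 1" "0 \<le> q" "q \<le> 1"
    using p q by simp_all
  obtain Q where Q: "Q \<in> {0..1} \<times> {0..1}" "pgf_period L p q e1 e2 Q = Q"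
    and lim: "(\<lambda>k. (pgf_period L p q e1 e2 ^^ k) (0, 0)) \<longlonglongrightarrow> Q"
    by (rule pgf_period_iterates_converge[OF pq])
  have "Q = (1, 1)"
    by (rule pgf_period_fixpoint_eq_one[OF L mean T abcd no_growth nontrivial Q])
  with lim have "(\<lambda>k. (pgf_period L p q e1 e2 ^^ k) (0, 0)) \<longlonglongrightarrow> (1, 1)"
    by simp
  from not_persists_of_iterates_tendsto_one[OF pq this]
  show "\<not> persists L p q (\<lambda>n. if even n then e1 else e2) (1, 0)"
    and "\<not> persists L p q (\<lambda>n. if even n then e1 else e2) (0, 1)" .
qed

end

theorem theorem5p1:
  fixes L :: "nat \<Rightarrow> 'w \<Rightarrow> nat pmf" and e1 e2 :: 'w and p q :: real
  defines "env \<equiv> (\<lambda>n::nat. if even n then e1 else e2)"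
  defines "M1 \<equiv> pmf_mean (L 1 e1)" and "M2 \<equiv> pmf_mean (L 1 e2)"
      and "m1 \<equiv> pmf_mean (L 2 e1)" and "m2 \<equiv> pmf_mean (L 2 e2)"
  assumes "0 < p" "p < 1" "0 < q" "q < 1"
    and "\<And>i w. i \<in> {1, 2} \<Longrightarrow> w \<in> {e1, e2} \<Longrightarrow> integrable (measure_pmf (L i w)) real"
    and "M1 > 0" "M2 > 0" "m1 > 0" "m2 > 0"
    and "\<not> (\<forall>i\<in>{1::nat, 2}. \<forall>w\<in>{e1, e2}. L i w = return_pmf 1)"
  shows "(persists L p q env (1, 0) \<longleftrightarrow>
            M1 * M2 * (1 - p)^2 + (M1 * m2 + m1 * M2) * p * q + m1 * m2 * (1 - q)^2
              > min 2 (1 + M1 * M2 * m1 * m2 * (1 - p - q)^2))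
       \<and> (persists L p q env (0, 1) \<longleftrightarrow>
            M1 * M2 * (1 - p)^2 + (M1 * m2 + m1 * M2) * p * q + m1 * m2 * (1 - q)^2
              > min 2 (1 + M1 * M2 * m1 * m2 * (1 - p - q)^2))"
proof -
  have mean: "0 < pmf_mean (L i w)" if "i \<in> {1, 2}" "w \<in> {e1, e2}" for i w
    using assms(11-14) that unfolding M1_def M2_def m1_def m2_def by auto
  obtain a b c d where abcd: "0 < a" "0 < b" "0 < c" "0 < d"
    and T: "\<And>v. mean_period L p q e1 e2 v = (a * fst v + b * snd v, c * fst v + d * snd v)"
    and trace: "a + d = M1 * M2 * (1 - p)^2 + (M1 * m2 + m1 * M2) * p * q + m1 * m2 * (1 - q)^2"
    and det: "a * d - b * c = M1 * M2 * m1 * m2 * (1 - p - q)^2"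
    by (rule mean_period_matrix[OF assms(6-9) assms(11-14)[unfolded M1_def M2_def m1_def m2_def],
          folded M1_def M2_def m1_def m2_def]) blast
  show ?thesis
    unfolding env_def trace[symmetric] det[symmetric]
    using alternating_persists_of_growth[OF assms(6-10) mean T abcd]
      alternating_not_persists_of_no_growth[OF assms(6-10) mean T abcd _ assms(15)] by blast
qed

end
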